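(* Let $(X,d,m)$ be $D$-Ahlfors regular, fix $o\in X$ and set $d(x)=1+d(o,x)$. For every $a\in(0,1]$ there exists $C_a\in(0,\infty)$ such that, for every $t\in(0,1/2]$ and every nonnegative $g\in L^1_{\mathrm{loc}}(X)$, there is a finite collection $\{x_j\}_j$ of points of $X$ such that: $t\,d(x_j)\le1$ for all $j$; $\sum_j\mathbf 1_{B(x_j,td(x_j))}(x)\le C_a$ for all $x\in X$; $\sum_j\mathbf 1_{B(x_j,atd(x_j))}(x)\ge1$ whenever $t\,d(x)\le1/2$; and $g(x_j)\le C_a\,m(B(x_j,td(x_j)))^{-1}\int_{B(x_j,td(x_j))}g\,dm$ for all $j$.
   Context: $(X,d,m)$ is $D$-Ahlfors regular ($D>0$) if there is $A\ge1$ with $A^{-1}r^D\le m(B(x,r))\le Ar^D$ for all $x\in X$, $r\ge0$, where $B(x,r)$ is the metric ball. *)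

theory Defs
  imports "HOL-Analysis.Analysis"
begin

text \<open>A metric measure space is modelled by a type of class metric_space together
with a measure m on its Borel sets with space m = UNIV.\<close>

definition ahlfors_regular :: "'a::metric_space measure \<Rightarrow> real \<Rightarrow> bool" where
  "ahlfors_regular m D \<longleftrightarrow>
     (\<exists>A::real. A \<ge> 1 \<and> (\<forall>x r. r \<ge> 0 \<longrightarrow>
        ennreal ((1 / A) * r powr D) \<le> emeasure m (ball x r) \<and>
        emeasure m (ball x r) \<le> ennreal (A * r powr D)))"

definition loc_integrable :: "'a::metric_space measure \<Rightarrow> ('a \<Rightarrow> real) \<Rightarrow> bool" where
  "loc_integrable m g \<longleftrightarrow> g \<in> borel_measurable m \<and>
     (\<forall>x r. set_integrable m (ball x r) g)"

end

theory Submission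
  imports Defs
begin

text \<open>Let \<open>d x = 1 + dist x0 x\<close> and \<open>\<rho> x = a t d(x) / 4\<close>. By Ahlfors regularity a
  ball of radius \<open>R\<close> contains at most \<open>A\<^sup>2 ((R + r) / r)\<^sup>D\<close> points at mutual distance
  \<open>\<ge> 2r\<close>. Hence the \<open>\<rho>\<close>-separated subsets of \<open>{t d \<le> 1/2}\<close> have bounded size, and one of
  maximal size is a net: the balls \<open>B(z, \<rho> z)\<close> cover \<open>{t d \<le> 1/2}\<close>. In each such ball
  pick a point \<open>x_z\<close> where \<open>g\<close> is at most its mean over the ball. Since \<open>d\<close> is 1-Lipschitz,
  \<open>d(x_z)\<close> and \<open>d(z)\<close> agree up to a factor \<open>9/8\<close>; thus the balls \<open>B(x_z, a t d(x_z))\<close>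
  still cover, the mean over \<open>B(z, \<rho> z)\<close> is controlled by the mean over the comparable ball
  \<open>B(x_z, t d(x_z))\<close>, and the centres \<open>z\<close> whose balls \<open>B(x_z, t d(x_z))\<close> contain a given
  \<open>x\<close> form a separated set inside a ball of radius \<open>\<approx> t d(x)\<close>, so the packing bound
  limits the overlap.\<close>

lemma sum_indicator_eq_card_filter:
  assumes "finite S"
  shows "(\<Sum>j\<in>S. indicator (B j) x) = real (card {j\<in>S. x \<in> B j})"
  using assms by (simp add: indicator_def Int_def flip: sum.inter_filter)

lemma set_integral_mono_set_nonneg:
  fixes g :: "'a \<Rightarrow> real"
  assumes "set_integrable M B g" "set_integrable M B' g" "B' \<subseteq> B" "\<And>x. x \<in> B \<Longrightarrow> 0 \<le> g x"
  shows "(LINT y:B'|M. g y) \<le> (LINT y:B|M. g y)"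
  using assms unfolding set_lebesgue_integral_def set_integrable_def
  by (intro integral_mono) (auto simp: indicator_def)

lemma ex_le_set_average:
  fixes g :: "'a \<Rightarrow> real"
  assumes g: "set_integrable M B g" and B: "B \<in> sets M" "emeasure M B \<noteq> \<infinity>"
    and pos: "0 < measure M B"
  shows "\<exists>y\<in>B. g y * measure M B \<le> (LINT y:B|M. g y)"
proof (rule ccontr)
  define c where "c = (LINT y:B|M. g y) / measure M B"
  assume "\<not> ?thesis"
  then have above: "c < g y" if "y \<in> B" for y
    using that pos by (auto simp: c_def divide_less_eq not_le)
  have const: "set_integrable M B (\<lambda>_. c)"
    using B by (simp add: set_integrable_def less_top)
  have diff: "set_integrable M B (\<lambda>y. g y - c)"
    using g const by (rule set_integral_diff(1))
  have "(LINT y:B|M. g y - c) = (LINT y:B|M. g y) - measure M B * c"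
    using g const B by (simp add: set_integral_diff set_integral_const)
  also have "\<dots> = 0"
    using pos by (simp add: c_def)
  finally have "AE y in M. indicator B y *\<^sub>R (g y - c) = 0"
    using diff above
    by (subst integral_nonneg_eq_0_iff_AE[symmetric])
       (auto simp: set_integrable_def set_lebesgue_integral_def indicator_def less_imp_le)
  then have "AE y in M. y \<notin> B"
    by eventually_elim (use above in \<open>fastforce simp: indicator_def\<close>)
  then have "B \<in> null_sets M"
    using B by (simp add: AE_iff_null_sets)
  then show False
    using pos by (simp add: null_sets_def measure_def)
qed

definition separated :: "('a::metric_space \<Rightarrow> real) \<Rightarrow> 'a set \<Rightarrow> bool" where
  "separated \<rho> P \<longleftrightarrow> (\<forall>y\<in>P. \<forall>z\<in>P. y \<noteq> z \<longrightarrow> min (\<rho> y) (\<rho> z) \<le> dist y z)"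

lemma separated_insert:
  "separated \<rho> (insert x S) \<longleftrightarrow>
     separated \<rho> S \<and> (\<forall>z\<in>S. z \<noteq> x \<longrightarrow> min (\<rho> x) (\<rho> z) \<le> dist x z)"
  unfolding separated_def by (auto simp: min.commute dist_commute)

lemma separated_dist_ge:
  assumes "separated \<rho> P" "y \<in> P" "z \<in> P" "y \<noteq> z" "\<And>w. w \<in> P \<Longrightarrow> s \<le> \<rho> w"
  shows "s \<le> dist y z"
  using assms unfolding separated_def by (metis min_le_iff_disj order_trans)

lemma ex_separated_net:
  fixes \<rho> :: "'a::metric_space \<Rightarrow> real"
  assumes \<rho>_pos: "\<And>x. x \<in> X \<Longrightarrow> 0 < \<rho> x"
    and card_le: "\<And>P. P \<subseteq> X \<Longrightarrow> finite P \<Longrightarrow> separated \<rho> P \<Longrightarrow> real (card P) \<le> N"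
  obtains S where "S \<subseteq> X" "finite S" "separated \<rho> S" "\<And>x. x \<in> X \<Longrightarrow> \<exists>z\<in>S. dist x z < \<rho> z"
proof -
  define admissible where "admissible P \<longleftrightarrow> P \<subseteq> X \<and> finite P \<and> separated \<rho> P" for P
  have "\<exists>S. admissible S \<and> (\<forall>P. admissible P \<longrightarrow> card P \<le> card S)"
  proof (rule ex_has_greatest_nat[where k="{}" and b="nat \<lceil>N\<rceil> + 1"])
    show "admissible {}" by (simp add: admissible_def separated_def)
    show "\<forall>P. admissible P \<longrightarrow> card P < nat \<lceil>N\<rceil> + 1"
    proof (intro allI impI)
      fix P assume "admissible P"
      then have "real (card P) \<le> N" using card_le by (simp add: admissible_def)
      then show "card P < nat \<lceil>N\<rceil> + 1" by linarith
    qed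
  qed
  then obtain S where S: "admissible S" and maximal: "\<And>P. admissible P \<Longrightarrow> card P \<le> card S"
    by blast
  have "\<exists>z\<in>S. dist x z < \<rho> z" if x: "x \<in> X" for x
  proof (cases "x \<in> S")
    case True
    then show ?thesis using \<rho>_pos x by force
  next
    case False
    then have "card S < card (insert x S)" using S by (simp add: admissible_def)
    then have "\<not> separated \<rho> (insert x S)" using maximal[of "insert x S"] S x
      by (auto simp: admissible_def)
    then obtain z where "z \<in> S" "dist x z < min (\<rho> x) (\<rho> z)"
      using S by (auto simp: separated_insert admissible_def not_le)
    then show ?thesis by auto
  qed
  then show ?thesis using S that by (auto simp: admissible_def)
qed

locale ahlfors_regular_space =
  fixes m :: "'a::metric_space measure" and D A :: real
  assumes sets_eq_borel: "sets m = sets borel"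
    and D_nonneg: "0 \<le> D"
    and A_ge_1: "1 \<le> A"
    and emeasure_ball_finite: "0 \<le> r \<Longrightarrow> emeasure m (ball x r) \<noteq> \<infinity>"
    and measure_ball_lower: "0 \<le> r \<Longrightarrow> r powr D / A \<le> measure m (ball x r)"
    and measure_ball_upper: "0 \<le> r \<Longrightarrow> measure m (ball x r) \<le> A * r powr D"

lemma ahlfors_regularE:
  fixes m :: "'a::metric_space measure"
  assumes "ahlfors_regular m D" "sets m = sets borel" "0 \<le> D"
  obtains A where "ahlfors_regular_space m D A"
proof -
  obtain A where A: "1 \<le> A"
    and bounds: "\<And>x r. 0 \<le> r \<Longrightarrow> ennreal (1 / A * r powr D) \<le> emeasure m (ball x r) \<and>
                                 emeasure m (ball x r) \<le> ennreal (A * r powr D)"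
    using assms(1) unfolding ahlfors_regular_def by blast
  have finite: "emeasure m (ball x r) \<noteq> \<infinity>" if "0 \<le> r" for x r
    using bounds[OF that, of x] by (auto simp: top_unique)
  have "ahlfors_regular_space m D A"
  proof
    fix x and r :: real assume r: "0 \<le> r"
    have eq: "emeasure m (ball x r) = ennreal (measure m (ball x r))"
      using finite[OF r] by (simp add: emeasure_eq_ennreal_measure)
    show "r powr D / A \<le> measure m (ball x r)"
      using bounds[OF r, of x] A by (simp add: eq ennreal_le_iff)
    show "measure m (ball x r) \<le> A * r powr D"
      using bounds[OF r, of x] A by (simp add: eq ennreal_le_iff)
  qed (use assms A finite in auto)
  then show ?thesis by (rule that)
qed

context ahlfors_regular_space
begin

lemma ball_in_sets [measurable]: "ball x r \<in> sets m"
  by (simp add: sets_eq_borel)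

lemma measure_ball_pos: "0 < r \<Longrightarrow> 0 < measure m (ball x r)"
  using measure_ball_lower[of r x] A_ge_1 by (smt (verit) divide_pos_pos powr_gt_zero)

lemma measure_ball_le_ratio:
  assumes "0 < r" "0 \<le> R"
  shows "measure m (ball y R) \<le> A * A * (R / r) powr D * measure m (ball x r)"
proof -
  have "measure m (ball y R) \<le> A * R powr D" using assms by (intro measure_ball_upper) simp
  also have "\<dots> = A * A * (R / r) powr D * (r powr D / A)"
    using assms A_ge_1 by (simp add: powr_divide)
  also have "\<dots> \<le> A * A * (R / r) powr D * measure m (ball x r)"
    using assms A_ge_1 by (intro mult_left_mono measure_ball_lower) auto
  finally show ?thesis .
qed

lemma card_le_packing:
  fixes P :: "'a set"
  assumes "finite P" "0 < r" "0 \<le> R"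
    and near: "\<And>p. p \<in> P \<Longrightarrow> dist c p \<le> R"
    and sep: "\<And>p q. p \<in> P \<Longrightarrow> q \<in> P \<Longrightarrow> p \<noteq> q \<Longrightarrow> 2 * r \<le> dist p q"
  shows "real (card P) \<le> A * A * ((R + r) / r) powr D"
proof -
  define K where "K = A * A * ((R + r) / r) powr D"
  have disjoint: "disjoint_family_on (\<lambda>p. ball p r) P"
    unfolding disjoint_family_on_def
  proof (intro ballI impI)
    fix p q assume "p \<in> P" "q \<in> P" "p \<noteq> q"
    then show "ball p r \<inter> ball q r = {}"
      using sep[of p q] dist_triangle_less_add[of p _ r q r] by (fastforce simp: dist_commute)
  qed
  have "real (card P) * measure m (ball c (R + r)) \<le> (\<Sum>p\<in>P. K * measure m (ball p r))"
    using assms unfolding K_def by (auto intro!: sum_bounded_below measure_ball_le_ratio)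
  also have "\<dots> = K * measure m (\<Union>p\<in>P. ball p r)"
    using assms disjoint emeasure_ball_finite
    by (simp add: measure_finite_Union sum_distrib_left image_subset_iff less_imp_le)
  also have "\<dots> \<le> K * measure m (ball c (R + r))"
  proof (intro mult_left_mono measure_mono_fmeasurable)
    show "(\<Union>p\<in>P. ball p r) \<subseteq> ball c (R + r)"
    proof (clarsimp)
      fix p y assume "p \<in> P" "dist p y < r"
      then show "dist c y < R + r" using near[of p] dist_triangle[of c y p] by linarith
    qed
    show "ball c (R + r) \<in> fmeasurable m"
      using assms emeasure_ball_finite by (intro fmeasurableI) (auto simp: less_top)
  qed (use assms in \<open>auto simp: K_def\<close>)
  finally show ?thesis
    using measure_ball_pos[of "R + r" c] assms by (simp add: K_def)
qed

end

locale whitney_scale = ahlfors_regular_space m D A for m :: "'a::metric_space measure" and D A +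
  fixes x0 :: 'a and a t :: real
  assumes a_pos: "0 < a" and a_le_1: "a \<le> 1" and t_pos: "0 < t" and t_le_half: "t \<le> 1/2"
begin

abbreviation d :: "'a \<Rightarrow> real" where "d x \<equiv> 1 + dist x0 x"

abbreviation \<rho> :: "'a \<Rightarrow> real" where "\<rho> x \<equiv> a / 4 * t * d x"

text \<open>The factor \<open>72 / a\<close> dominates both ratios of radii that occur below:
  \<open>352 / (5 * a) + 1\<close> in the overlap count and \<open>9 / (2 * a)\<close> in the comparison of averages.\<close>

abbreviation C :: real where "C \<equiv> A * A * (72 / a) powr D"

lemma t_d_pos: "0 < t * d x"
  using t_pos by (simp add: add_pos_nonneg)

lemma rho_pos: "0 < \<rho> x"
  using a_pos t_pos by (simp add: add_pos_nonneg)

lemma rho_le: "\<rho> x \<le> t * d x / 4"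
  using a_le_1 t_pos by (simp add: mult_right_mono)

lemma t_d_le: "t * d x \<le> d x / 2"
  using mult_right_mono[OF t_le_half, of "d x"] by simp

lemma t_d_near:
  assumes "dist x y < \<rho> x"
  shows "7/8 * (t * d x) \<le> t * d y" and "t * d y \<le> 9/8 * (t * d x)"
proof -
  have "\<bar>d y - d x\<bar> \<le> d x / 8"
    using abs_dist_diff_le[of y x0 x] assms rho_le[of x] t_d_le[of x]
    by (simp add: dist_commute)
  then have "\<bar>t * d y - t * d x\<bar> \<le> 1/8 * (t * d x)"
    using t_pos mult_left_mono[of _ _ t] by (simp add: abs_mult flip: right_diff_distrib)
  then show "7/8 * (t * d x) \<le> t * d y" and "t * d y \<le> 9/8 * (t * d x)"
    by linarith+
qed

lemma ex_net:
  obtains S where "S \<subseteq> {x. t * d x \<le> 1/2}" "finite S" "separated \<rho> S"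
    "\<And>x. t * d x \<le> 1/2 \<Longrightarrow> \<exists>z\<in>S. dist x z < \<rho> z"
proof (rule ex_separated_net[where X="{x. t * d x \<le> 1/2}" and \<rho>=\<rho>])
  define r where "r = a * t / 8"
  have r: "0 < r" using a_pos t_pos by (simp add: r_def)
  fix P assume P: "P \<subseteq> {x. t * d x \<le> 1/2}" "finite P" "separated \<rho> P"
  show "real (card P) \<le> A * A * ((1 / (2 * t) + r) / r) powr D"
  proof (rule card_le_packing[OF \<open>finite P\<close> r])
    show "0 \<le> 1 / (2 * t)" using t_pos by simp
    fix p assume "p \<in> P"
    then have "t * d p \<le> 1/2" using P(1) by auto
    then show "dist x0 p \<le> 1 / (2 * t)" using t_pos by (simp add: field_simps)
  next
    fix p q assume "p \<in> P" "q \<in> P" "p \<noteq> q"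
    moreover have "2 * r \<le> \<rho> z" for z
      using a_pos t_pos mult_left_mono[of 1 "d z" "a / 4 * t"] by (simp add: r_def)
    ultimately show "2 * r \<le> dist p q"
      using P(3) by (blast intro: separated_dist_ge)
  qed
qed (use rho_pos that in auto)

lemma card_near_centres_le:
  assumes "finite P" "separated \<rho> P"
    and near: "\<And>z. z \<in> P \<Longrightarrow> dist z x < 11/8 * (t * d z)"
  shows "real (card P) \<le> C"
proof -
  define r where "r = a * t * d x / 16"
  have r: "0 < r" using a_pos t_pos by (simp add: r_def add_pos_nonneg)
  have comparable: "d x / 2 \<le> d z \<and> t * d z \<le> 16/5 * (t * d x)" if "z \<in> P" for z
  proof -
    have "dist z x < 11/16 * d z" using near[OF that] t_d_le[of z] by linarith
    then have "d x / 2 \<le> d z \<and> d z \<le> 16/5 * d x"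
      using abs_dist_diff_le[of z x0 x] by (auto simp: dist_commute)
    then show ?thesis using t_pos mult_left_mono[of "d z" "16/5 * d x" t] by auto
  qed
  have "real (card P) \<le> A * A * ((22/5 * (t * d x) + r) / r) powr D"
  proof (rule card_le_packing[OF \<open>finite P\<close> r])
    show "0 \<le> 22/5 * (t * d x)" using t_pos by simp
    fix z assume "z \<in> P"
    then show "dist x z \<le> 22/5 * (t * d x)"
      using near[of z] comparable[of z] by (auto simp: dist_commute)
  next
    fix z z' assume "z \<in> P" "z' \<in> P" "z \<noteq> z'"
    moreover have "2 * r \<le> \<rho> w" if "w \<in> P" for w
      using a_pos t_pos comparable[OF that] mult_left_mono[of "d x / 2" "d w" "a / 4 * t"]
      by (simp add: r_def)
    ultimately show "2 * r \<le> dist z z'"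
      using assms(2) by (blast intro: separated_dist_ge)
  qed
  also have "\<dots> \<le> C"
  proof -
    have "(22/5 * u + a * u / 16) / (a * u / 16) = 352 / (5 * a) + 1" if "0 < u" for u
      using a_pos that by (simp add: field_simps)
    from this[of "t * d x"] have "(22/5 * (t * d x) + r) / r = 352 / (5 * a) + 1"
      using t_pos unfolding r_def mult.assoc by (simp add: add_pos_nonneg)
    also have "\<dots> \<le> 72 / a"
      using a_pos a_le_1 by (simp add: field_simps)
    finally show ?thesis
      using A_ge_1 r D_nonneg t_pos by (auto intro!: mult_left_mono powr_mono2 add_pos_nonneg)
  qed
  finally show ?thesis .
qed

lemma sum_indicator_centres_le:
  assumes "finite S" "separated \<rho> S" and p: "\<And>z. z \<in> S \<Longrightarrow> dist z (p z) < \<rho> z"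
  shows "(\<Sum>j\<in>p ` S. indicator (ball j (t * d j)) x) \<le> C"
proof -
  define T where "T = {z\<in>S. x \<in> ball (p z) (t * d (p z))}"
  have "{j \<in> p ` S. x \<in> ball j (t * d j)} = p ` T"
    by (auto simp: T_def)
  then have "(\<Sum>j\<in>p ` S. indicator (ball j (t * d j)) x) \<le> real (card T)"
    using \<open>finite S\<close> by (simp add: sum_indicator_eq_card_filter card_image_le T_def)
  also have "\<dots> \<le> C"
  proof (rule card_near_centres_le)
    show "finite T" "separated \<rho> T"
      using assms(1,2) by (auto simp: T_def separated_def)
    fix z assume "z \<in> T"
    then have "z \<in> S" "dist (p z) x < t * d (p z)" by (auto simp: T_def)
    then show "dist z x < 11/8 * (t * d z)"
      using p[of z] rho_le[of z] t_d_near(2)[of z "p z"] dist_triangle[of z x "p z"] by linarith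
  qed
  finally show ?thesis .
qed

lemma le_average_ball:
  fixes g :: "'a \<Rightarrow> real"
  assumes g: "\<And>x r. set_integrable m (ball x r) g" "\<And>x. 0 \<le> g x"
    and near: "dist z j < \<rho> z"
    and below: "g j * measure m (ball z (\<rho> z)) \<le> (LINT y:ball z (\<rho> z)|m. g y)"
  shows "g j \<le> C * (1 / measure m (ball j (t * d j))) * (LINT y:ball j (t * d j)|m. g y)"
proof -
  have td: "7/8 * (t * d z) \<le> t * d j" "t * d j \<le> 9/8 * (t * d z)"
    using t_d_near[OF near] by auto
  have "ball z (\<rho> z) \<subseteq> ball j (t * d j)"
  proof
    fix y assume "y \<in> ball z (\<rho> z)"
    then show "y \<in> ball j (t * d j)"
      using near rho_le[of z] td dist_triangle[of j y z] by (simp add: dist_commute)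
  qed
  then have integrals: "(LINT y:ball z (\<rho> z)|m. g y) \<le> (LINT y:ball j (t * d j)|m. g y)"
    using g by (intro set_integral_mono_set_nonneg) auto
  have "measure m (ball j (t * d j)) \<le> A * A * (t * d j / \<rho> z) powr D * measure m (ball z (\<rho> z))"
    using rho_pos t_pos by (intro measure_ball_le_ratio) auto
  also have "\<dots> \<le> C * measure m (ball z (\<rho> z))"
  proof -
    have "t * d j / \<rho> z \<le> 9/8 * (t * d z) / \<rho> z"
      using td(2) rho_pos[of z] by (intro divide_right_mono) auto
    also have "\<dots> = 9 / (2 * a)"
    proof -
      have "9/8 * u / (a / 4 * u) = 9 / (2 * a)" if "0 < u" for u
        using a_pos that by (simp add: field_simps)
      from this[of "t * d z"] show ?thesis
        using t_pos unfolding mult.assoc by (simp add: add_pos_nonneg)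
    qed
    also have "\<dots> \<le> 72 / a"
      using a_pos by (simp add: field_simps)
    finally have "t * d j / \<rho> z \<le> 72 / a" .
    moreover have "0 \<le> t * d j / \<rho> z"
      using rho_pos[of z] t_pos by (intro divide_nonneg_pos) auto
    ultimately show ?thesis
      using A_ge_1 D_nonneg by (intro mult_right_mono mult_left_mono powr_mono2) auto
  qed
  finally have "measure m (ball j (t * d j)) \<le> C * measure m (ball z (\<rho> z))" .
  then have "g j * measure m (ball j (t * d j)) \<le> g j * (C * measure m (ball z (\<rho> z)))"
    using g(2) by (rule mult_left_mono)
  also have "\<dots> = C * (g j * measure m (ball z (\<rho> z)))"
    by (simp add: ac_simps)
  also have "\<dots> \<le> C * (LINT y:ball j (t * d j)|m. g y)"
    using below integrals A_ge_1 by (intro mult_left_mono) auto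
  finally show ?thesis
    using measure_ball_pos[of "t * d j" j] t_pos by (simp add: field_simps add_pos_nonneg)
qed

lemma ex_whitney_centres:
  fixes g :: "'a \<Rightarrow> real"
  assumes g: "\<And>x r. set_integrable m (ball x r) g" "\<And>x. 0 \<le> g x"
  shows "\<exists>S. finite S \<and>
           (\<forall>j\<in>S. t * d j \<le> 1) \<and>
           (\<forall>x. (\<Sum>j\<in>S. indicator (ball j (t * d j)) x) \<le> C) \<and>
           (\<forall>x. t * d x \<le> 1/2 \<longrightarrow> (\<Sum>j\<in>S. indicator (ball j (a * t * d j)) x) \<ge> (1::real)) \<and>
           (\<forall>j\<in>S. g j \<le> C * (1 / measure m (ball j (t * d j))) * (LINT y:ball j (t * d j)|m. g y))"
proof -
  obtain S0 where S0: "S0 \<subseteq> {x. t * d x \<le> 1/2}" "finite S0" "separated \<rho> S0"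
    and cover: "\<And>x. t * d x \<le> 1/2 \<Longrightarrow> \<exists>z\<in>S0. dist x z < \<rho> z"
    using ex_net by blast
  have "\<exists>y\<in>ball z (\<rho> z). g y * measure m (ball z (\<rho> z)) \<le> (LINT y:ball z (\<rho> z)|m. g y)" for z
    using emeasure_ball_finite[OF less_imp_le[OF rho_pos]] measure_ball_pos[OF rho_pos]
    by (intro ex_le_set_average g) auto
  then obtain p where p: "\<And>z. dist z (p z) < \<rho> z"
    "\<And>z. g (p z) * measure m (ball z (\<rho> z)) \<le> (LINT y:ball z (\<rho> z)|m. g y)"
    by (metis mem_ball)
  show ?thesis
  proof (intro exI[of _ "p ` S0"] conjI allI impI ballI)
    show "finite (p ` S0)" using S0(2) by simp
    show "(\<Sum>j\<in>p ` S0. indicator (ball j (t * d j)) x) \<le> C" for x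
      using S0 p(1) by (intro sum_indicator_centres_le)
  next
    fix j assume "j \<in> p ` S0"
    then obtain z where "z \<in> S0" "j = p z" by blast
    then show "t * d j \<le> 1"
      using S0(1) t_d_near(2)[OF p(1), of z] by auto
    show "g j \<le> C * (1 / measure m (ball j (t * d j))) * (LINT y:ball j (t * d j)|m. g y)"
      using le_average_ball[OF g p(1) p(2)] \<open>j = p z\<close> by simp
  next
    fix x assume "t * d x \<le> 1/2"
    then obtain z where z: "z \<in> S0" "dist x z < \<rho> z" using cover by blast
    have "dist (p z) x < 2 * \<rho> z"
      using p(1)[of z] z(2) dist_triangle[of "p z" x z] by (simp add: dist_commute)
    also have "\<dots> = a * (1/2 * (t * d z))"
      by simp
    also have "\<dots> \<le> a * (t * d (p z))"
      using t_d_near(1)[OF p(1)[of z]] a_pos t_d_pos[of z] by (intro mult_left_mono) auto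
    finally have "indicator (ball (p z) (a * t * d (p z))) x = (1::real)"
      by (simp add: mult.assoc)
    moreover have "indicator (ball (p z) (a * t * d (p z))) x
        \<le> (\<Sum>j\<in>p ` S0. indicator (ball j (a * t * d j)) x :: real)"
      using z(1) S0(2) by (intro member_le_sum) auto
    ultimately show "1 \<le> (\<Sum>j\<in>p ` S0. indicator (ball j (a * t * d j)) x :: real)"
      by simp
  qed
qed

end

theorem mainTheorem7:
  fixes m :: "'a::metric_space measure" and D :: real and x0 :: 'a
  assumes "space m = UNIV" and "sets m = sets borel"
    and "D > 0" and "ahlfors_regular m D"
  shows "\<forall>a::real. 0 < a \<and> a \<le> 1 \<longrightarrow>
    (\<exists>C::real. 0 < C \<and>
      (\<forall>t::real. \<forall>g::'a \<Rightarrow> real.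
         0 < t \<and> t \<le> 1/2 \<and> loc_integrable m g \<and> (\<forall>x. 0 \<le> g x) \<longrightarrow>
         (\<exists>S::'a set. finite S \<and>
            (\<forall>j\<in>S. t * (1 + dist x0 j) \<le> 1) \<and>
            (\<forall>x. (\<Sum>j\<in>S. indicator (ball j (t * (1 + dist x0 j))) x) \<le> C) \<and>
            (\<forall>x. t * (1 + dist x0 x) \<le> 1/2 \<longrightarrow>
                 (\<Sum>j\<in>S. indicator (ball j (a * t * (1 + dist x0 j))) x) \<ge> (1::real)) \<and>
            (\<forall>j\<in>S. g j \<le> C * (1 / measure m (ball j (t * (1 + dist x0 j)))) *
                 (LINT y:ball j (t * (1 + dist x0 j))|m. g y)))))"
  apply (intro allI impI)
  subgoal premises a for a
  proof -
    obtain A where regular: "ahlfors_regular_space m D A"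
      using ahlfors_regularE[OF assms(4,2)] assms(3) by (metis less_imp_le)
    interpret ahlfors_regular_space m D A by (fact regular)
    show ?thesis
      apply (intro exI[of _ "A * A * (72 / a) powr D"] conjI allI impI)
      subgoal using A_ge_1 a by simp
      subgoal premises tg for t g
      proof -
        interpret whitney_scale m D A x0 a t
          using regular a tg by (simp add: whitney_scale_def whitney_scale_axioms_def)
        show ?thesis
          using ex_whitney_centres tg by (simp add: loc_integrable_def)
      qed
      done
  qed
  done

end
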